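(* Let $\ell$ satisfy Assumption 1 and let $W(t)$, $t\ge0$, be a gradient flow trajectory whose initialization satisfies Assumption 2. Then for every $R>0$ there is a constant $\epsilon(R)>0$ such that for every $t\ge 1$ with $W(t)\in B(R)$ we have $\left\|\frac{\partial\mathcal{R}}{\partial W_1}(W(t))\right\|_F\ge\epsilon(R)$. Consequently, for every $R>0$ the set $\{t\ge 0: W(t)\in B(R)\}$ has finite Lebesgue measure, and $t\mapsto\max_{1\le k\le L}\|W_k(t)\|_F$ is unbounded.
   Context: Setting: data $(x_i,y_i)_{i=1}^n$ with $x_i\in\mathbb{R}^d$, $\|x_i\|\le 1$, $y_i\in\{-1,+1\}$; put $z_i:=y_ix_i$. The data are linearly separable, i.e. some unit vector $u$ has $\langle u,z_i\rangle>0$ for all $i$. Let $\gamma:=\max_{\|u\|=1}\min_{i}\langle u,z_i\rangle>0$ and let $\bar u$ be the unique unit vector attaining it. A depth-$L$ linear network is $W=(W_L,\dots,W_1)$ with $W_k\in\mathbb{R}^{d_k\times d_{k-1}}$, $d_0=d$, $d_L=1$, and $w_{\mathrm{prod}}:=(W_L\cdots W_1)^\top\in\mathbb{R}^d$. The risk is $\mathcal{R}(W)=\frac1n\sum_{i=1}^n\ell(\langle w_{\mathrm{prod}},z_i\rangle)$. For $R>0$, $B(R):=\{W:\max_{1\le k\le L}\|W_k\|_F\le R\}$. Assumption 1: $\ell:\mathbb{R}\to\mathbb{R}$ is continuously differentiable, $\ell'(x)<0$ for all $x$, $\lim_{x\to-\infty}\ell(x)=\infty$ and $\lim_{x\to\infty}\ell(x)=0$.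 Gradient flow: a $C^1$ curve $W(t)$, $t\in[0,\infty)$, with $\frac{d}{dt}W(t)=-\nabla\mathcal{R}(W(t))$. Assumption 2: $\nabla\mathcal{R}(W(0))\neq 0$ and $\mathcal{R}(W(0))\le \ell(0)$. *)

theory Defs
  imports "HOL-Analysis.Analysis"
begin

text \<open>Parameters of a depth-L linear network are encoded as
  W :: nat => nat => nat => real, where W k a b is entry (a,b) of the matrix W_k
  (k in {1..L}, a < dims k, b < dims (k-1)); other entries are irrelevant.
  Data: z i j is the j-th coordinate of z_i = y_i x_i (i < n, j < d).\<close>

type_synonym params = "nat \<Rightarrow> nat \<Rightarrow> nat \<Rightarrow> real"

definition valid_entry :: "nat \<Rightarrow> (nat \<Rightarrow> nat) \<Rightarrow> nat \<Rightarrow> nat \<Rightarrow> nat \<Rightarrow> bool" where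
  "valid_entry L dims k a b \<longleftrightarrow> 1 \<le> k \<and> k \<le> L \<and> a < dims k \<and> b < dims (k - 1)"

fun prodmat :: "(nat \<Rightarrow> nat) \<Rightarrow> nat \<Rightarrow> params \<Rightarrow> nat \<Rightarrow> nat \<Rightarrow> nat \<Rightarrow> real" where
  "prodmat dims d W 0 a j = (if a = j then 1 else 0)"
| "prodmat dims d W (Suc k) a j = (\<Sum>b<dims k. W (Suc k) a b * prodmat dims d W k b j)"

text \<open>w_prod = (W_L ... W_1)^T, a vector in R^d (d_L = 1).\<close>
definition wprod :: "nat \<Rightarrow> (nat \<Rightarrow> nat) \<Rightarrow> nat \<Rightarrow> params \<Rightarrow> nat \<Rightarrow> real" where
  "wprod L dims d W j = prodmat dims d W L 0 j"

definition risk :: "(real \<Rightarrow> real) \<Rightarrow> nat \<Rightarrow> nat \<Rightarrow> (nat \<Rightarrow> nat \<Rightarrow> real)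
    \<Rightarrow> nat \<Rightarrow> (nat \<Rightarrow> nat) \<Rightarrow> params \<Rightarrow> real" where
  "risk lf n d z L dims W = (1 / real n) * (\<Sum>i<n. lf (\<Sum>j<d. wprod L dims d W j * z i j))"

definition upd_entry :: "params \<Rightarrow> nat \<Rightarrow> nat \<Rightarrow> nat \<Rightarrow> real \<Rightarrow> params" where
  "upd_entry W k a b s = (\<lambda>k' a' b'. if (k', a', b') = (k, a, b) then W k a b + s else W k' a' b')"

definition pderiv_entry :: "(params \<Rightarrow> real) \<Rightarrow> params \<Rightarrow> nat \<Rightarrow> nat \<Rightarrow> nat \<Rightarrow> real" where
  "pderiv_entry f W k a b = deriv (\<lambda>s. f (upd_entry W k a b s)) 0"

definition frob_layer :: "(nat \<Rightarrow> nat) \<Rightarrow> params \<Rightarrow> nat \<Rightarrow> real" where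
  "frob_layer dims W k = sqrt (\<Sum>a<dims k. \<Sum>b<dims (k - 1). (W k a b)\<^sup>2)"

definition maxnorm :: "nat \<Rightarrow> (nat \<Rightarrow> nat) \<Rightarrow> params \<Rightarrow> real" where
  "maxnorm L dims W = Max ((\<lambda>k. frob_layer dims W k) ` {1..L})"

definition inB :: "nat \<Rightarrow> (nat \<Rightarrow> nat) \<Rightarrow> real \<Rightarrow> params \<Rightarrow> bool" where
  "inB L dims R W \<longleftrightarrow> maxnorm L dims W \<le> R"

definition grad_W1_norm :: "(nat \<Rightarrow> nat) \<Rightarrow> (params \<Rightarrow> real) \<Rightarrow> params \<Rightarrow> real" where
  "grad_W1_norm dims f W = sqrt (\<Sum>a<dims 1. \<Sum>b<dims 0. (pderiv_entry f W 1 a b)\<^sup>2)"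

end

theory Submission
  imports Defs
begin

text \<open>Along the flow the risk decreases at rate \<open>\<parallel>\<nabla>\<R>\<parallel>\<^sup>2\<close>, so \<open>\<R>(W(t)) \<le> \<R>(W(1)) < \<ell>(0)\<close> for
  \<open>t \<ge> 1\<close>, the strict inequality because the initial gradient is nonzero; hence some margin
  \<open>\<langle>w\<^sub>p\<^sub>r\<^sub>o\<^sub>d, z\<^sub>i\<rangle>\<close> exceeds a fixed \<open>s\<^sub>0 > 0\<close>. The gradient with respect to \<open>W\<^sub>1\<close> is the outer product
  of \<open>v = (W\<^sub>L \<cdots> W\<^sub>2)\<^sup>T\<close> and \<open>g = (1/n) \<Sum>\<^sub>i \<ell>'(\<langle>w\<^sub>p\<^sub>r\<^sub>o\<^sub>d, z\<^sub>i\<rangle>) z\<^sub>i\<close>. In \<open>B(R)\<close> a margin above \<open>s\<^sub>0\<close>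
  forces \<open>\<parallel>v\<parallel>\<close> to be bounded below; the margins are bounded there, so \<open>\<ell>' \<le> -c < 0\<close> on them and
  \<open>\<langle>g, u\<rangle> \<le> -(c/n) \<Sum>\<^sub>i \<langle>u, z\<^sub>i\<rangle>\<close> for a separating \<open>u\<close>, which bounds \<open>\<parallel>g\<parallel>\<close> below. Integrating
  \<open>\<parallel>\<nabla>\<R>\<parallel>\<^sup>2 \<ge> \<epsilon>(R)\<^sup>2\<close> over the times \<open>t \<ge> 1\<close> spent in \<open>B(R)\<close> bounds their measure by
  \<open>\<R>(W(1)) / \<epsilon>(R)\<^sup>2\<close>, so the trajectory cannot remain in any ball.\<close>

section \<open>Real analysis\<close>

lemma measure_le_dissipation:
  fixes F g :: "real \<Rightarrow> real" and S :: "real set"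
  assumes S_closed: "closed S" and T: "a \<le> T"
    and deriv: "\<And>t. a \<le> t \<Longrightarrow> t \<le> T \<Longrightarrow> (F has_real_derivative - g t) (at t within {a..T})"
    and g_nonneg: "\<And>t. a \<le> t \<Longrightarrow> t \<le> T \<Longrightarrow> 0 \<le> g t"
    and g_ge: "\<And>t. t \<in> S \<Longrightarrow> a \<le> t \<Longrightarrow> t \<le> T \<Longrightarrow> e \<le> g t"
  shows "e * measure lebesgue (S \<inter> {a..T}) \<le> F a - F T"
proof -
  have "((\<lambda>t. - g t) has_integral (F T - F a)) {a..T}"
    using deriv by (intro fundamental_theorem_of_calculus[OF T])
      (auto simp: has_real_derivative_iff_has_vector_derivative[symmetric])
  from has_integral_neg[OF this] have g_int: "(g has_integral (F a - F T)) {a..T}"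
    by simp
  have "S \<inter> {a..T} \<in> lmeasurable"
    using S_closed by (intro lmeasurable_compact closed_Int_compact) auto
  then have "(indicator (S \<inter> {a..T}) has_integral measure lebesgue (S \<inter> {a..T})) UNIV"
    using lmeasurable_iff_indicator_has_integral by blast
  moreover have "indicator (S \<inter> {a..T}) = (\<lambda>t. if t \<in> {a..T} then indicator S t else (0::real))"
    by (auto simp: fun_eq_iff indicator_def)
  ultimately have "(indicator S has_integral measure lebesgue (S \<inter> {a..T})) {a..T}"
    by (simp only: has_integral_restrict_UNIV)
  then have "((\<lambda>t. e * indicator S t) has_integral e * measure lebesgue (S \<inter> {a..T})) {a..T}"
    by (rule has_integral_mult_right)
  then show ?thesis
    by (rule has_integral_le[OF _ g_int]) (auto simp: indicator_def g_ge g_nonneg)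
qed

lemma lmeasurable_if_dissipation_bounded:
  fixes F g :: "real \<Rightarrow> real" and S :: "real set"
  assumes S_closed: "closed S" and S_sub: "S \<subseteq> {a..}"
    and deriv: "\<And>t. a \<le> t \<Longrightarrow> (F has_real_derivative - g t) (at t within {a..})"
    and g_nonneg: "\<And>t. a \<le> t \<Longrightarrow> 0 \<le> g t"
    and F_nonneg: "\<And>t. a \<le> t \<Longrightarrow> 0 \<le> F t"
    and e: "0 < e" and g_ge: "\<And>t. t \<in> S \<Longrightarrow> e \<le> g t"
  shows "S \<in> lmeasurable"
proof -
  have S_seg: "S \<inter> {a..T} \<in> lmeasurable" for T
    using S_closed by (intro lmeasurable_compact closed_Int_compact) auto
  have measure_seg: "measure lebesgue (S \<inter> {a..T}) \<le> F a / e" if T: "a \<le> T" for T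
  proof -
    have "e * measure lebesgue (S \<inter> {a..T}) \<le> F a - F T"
      using S_closed T g_nonneg g_ge
      by (intro measure_le_dissipation) (auto intro: DERIV_subset[OF deriv])
    also have "\<dots> \<le> F a" using F_nonneg T by simp
    finally show ?thesis using e by (simp add: pos_le_divide_eq mult.commute)
  qed
  have "(\<Union>m::nat. S \<inter> {a..a + real m}) \<in> lmeasurable"
  proof (rule fmeasurable_UN_bound)
    fix I :: "nat set" assume "finite I"
    then obtain k where "I \<subseteq> {..<k}" using finite_nat_bounded by blast
    then have "(\<Union>m\<in>I. S \<inter> {a..a + real m}) \<subseteq> S \<inter> {a..a + real k}"
      by (fastforce simp: subset_eq)
    then have "measure lebesgue (\<Union>m\<in>I. S \<inter> {a..a + real m}) \<le> measure lebesgue (S \<inter> {a..a + real k})"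
      using S_seg \<open>finite I\<close> by (intro measure_mono_fmeasurable sets.finite_UN fmeasurableD) auto
    also have "\<dots> \<le> F a / e" by (rule measure_seg) simp
    finally show "measure lebesgue (\<Union>m\<in>I. S \<inter> {a..a + real m}) \<le> F a / e" .
  qed (use S_seg in auto)
  moreover have "(\<Union>m::nat. S \<inter> {a..a + real m}) = S"
  proof (intro equalityI subsetI)
    fix t assume t: "t \<in> S"
    obtain m :: nat where "t - a \<le> real m" using real_arch_simple by blast
    then have "t \<in> S \<inter> {a..a + real m}" using t S_sub by auto
    then show "t \<in> (\<Union>m::nat. S \<inter> {a..a + real m})" by blast
  qed blast
  ultimately show ?thesis by simp
qed

lemma atLeast_not_lmeasurable: "{a::real..} \<notin> lmeasurable"
proof
  assume "{a..} \<in> lmeasurable"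
  define m where "m = nat \<lceil>measure lebesgue {a..}\<rceil> + 1"
  have "real m = measure lebesgue {a..a + real m}" by simp
  also have "\<dots> \<le> measure lebesgue {a..}"
    using \<open>{a..} \<in> lmeasurable\<close> by (intro measure_mono_fmeasurable) auto
  finally have "real m \<le> measure lebesgue {a..}" .
  then show False unfolding m_def by linarith
qed

lemma pos_if_strict_decreasing_tendsto_zero:
  fixes f :: "real \<Rightarrow> real"
  assumes dec: "\<And>x y. x < y \<Longrightarrow> f y < f x" and lim: "(f \<longlongrightarrow> 0) at_top"
  shows "0 < f x"
proof -
  have "0 \<le> f (x + 1)"
  proof (rule tendsto_upperbound[OF lim])
    show "\<forall>\<^sub>F y in at_top. f y \<le> f (x + 1)"
      unfolding eventually_at_top_linorder by (rule exI[of _ "x + 1"]) (auto simp: le_less dest: dec)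
  qed simp
  with dec[of x "x + 1"] show ?thesis by simp
qed

section \<open>Products of layer matrices\<close>

fun dprodmat :: "(nat \<Rightarrow> nat) \<Rightarrow> nat \<Rightarrow> params \<Rightarrow> params \<Rightarrow> nat \<Rightarrow> nat \<Rightarrow> nat \<Rightarrow> real" where
  "dprodmat dims d W V 0 a j = 0"
| "dprodmat dims d W V (Suc k) a j =
     (\<Sum>b<dims k. V (Suc k) a b * prodmat dims d W k b j + W (Suc k) a b * dprodmat dims d W V k b j)"

text \<open>\<open>upper_prodmat dims W k\<close> is \<open>W\<^sub>k\<^sub>+\<^sub>1 \<cdots> W\<^sub>2\<close> (the identity for \<open>k = 0\<close>), a
  \<open>dims (k + 1) \<times> dims 1\<close> matrix, so that \<open>W\<^sub>k\<^sub>+\<^sub>1 \<cdots> W\<^sub>1 = upper_prodmat dims W k \<cdot> W\<^sub>1\<close>.\<close>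
fun upper_prodmat :: "(nat \<Rightarrow> nat) \<Rightarrow> params \<Rightarrow> nat \<Rightarrow> nat \<Rightarrow> nat \<Rightarrow> real" where
  "upper_prodmat dims W 0 a a' = (if a = a' then 1 else 0)"
| "upper_prodmat dims W (Suc k) a a' = (\<Sum>b<dims (Suc k). W (Suc (Suc k)) a b * upper_prodmat dims W k b a')"

definition unit_param :: "nat \<Rightarrow> nat \<Rightarrow> nat \<Rightarrow> params" where
  "unit_param k a b = (\<lambda>k' a' b'. if (k', a', b') = (k, a, b) then 1 else 0)"

lemma has_real_derivative_prodmat:
  assumes der: "\<And>k a b. valid_entry L dims k a b \<Longrightarrow>
      ((\<lambda>s. C s k a b) has_real_derivative V k a b) (at x within S)"
  shows "k \<le> L \<Longrightarrow> a < dims k \<Longrightarrow>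
     ((\<lambda>s. prodmat dims d (C s) k a j) has_real_derivative dprodmat dims d (C x) V k a j) (at x within S)"
proof (induction k arbitrary: a)
  case 0
  then show ?case by simp
next
  case (Suc k)
  have "((\<lambda>s. C s (Suc k) a b * prodmat dims d (C s) k b j) has_real_derivative
       V (Suc k) a b * prodmat dims d (C x) k b j + C x (Suc k) a b * dprodmat dims d (C x) V k b j)
       (at x within S)" if b: "b < dims k" for b
  proof -
    have "valid_entry L dims (Suc k) a b" using Suc.prems b unfolding valid_entry_def by auto
    from DERIV_mult[OF der[OF this] Suc.IH[of b]] show ?thesis
      using Suc.prems b by (simp add: mult.commute)
  qed
  then show ?case by (auto intro: DERIV_sum)
qed

lemma dprodmat_sum:
  "dprodmat dims d W (\<lambda>k a b. \<Sum>e\<in>E. f e * V e k a b) k a j = (\<Sum>e\<in>E. f e * dprodmat dims d W (V e) k a j)"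
  by (induction k arbitrary: a)
    (simp_all add: sum_distrib_left sum_distrib_right sum.distrib algebra_simps sum.swap[of _ E])

lemma dprodmat_cong:
  "(\<And>k' a' b'. valid_entry L dims k' a' b' \<Longrightarrow> k' \<le> k \<Longrightarrow> V k' a' b' = V' k' a' b') \<Longrightarrow>
    k \<le> L \<Longrightarrow> a < dims k \<Longrightarrow> dprodmat dims d W V k a j = dprodmat dims d W V' k a j"
proof (induction k arbitrary: a)
  case 0
  then show ?case by simp
next
  case (Suc k)
  have "V (Suc k) a b = V' (Suc k) a b" if "b < dims k" for b
    using Suc.prems that by (auto simp: valid_entry_def)
  moreover have "dprodmat dims d W V k b j = dprodmat dims d W V' k b j" if "b < dims k" for b
    using Suc.prems that by (intro Suc.IH) auto
  ultimately show ?case by simp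
qed

lemma dprodmat_unit_first_layer:
  assumes dims0: "dims 0 = d" and b: "b < d"
  shows "dprodmat dims d W (unit_param 1 a b) (Suc k) a' j = upper_prodmat dims W k a' a * (if b = j then 1 else 0)"
proof (induction k arbitrary: a')
  case 0
  have "dprodmat dims d W (unit_param 1 a b) (Suc 0) a' j = (\<Sum>b0<d. if b0 = b \<and> a' = a \<and> b0 = j then 1 else 0)"
    by (simp add: dims0 unit_param_def) (intro sum.cong; auto)
  also have "\<dots> = (if a' = a \<and> b = j then 1 else 0)"
    using b by (auto cong: conj_cong)
  finally show ?case by simp
next
  case (Suc k)
  then show ?case by (simp add: unit_param_def sum_distrib_right mult.assoc)
qed

lemma prodmat_Suc_eq_upper_prodmat:
  assumes dims0: "dims 0 = d" and j: "j < d"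
  shows "a' < dims (Suc k) \<Longrightarrow> prodmat dims d W (Suc k) a' j = (\<Sum>a<dims 1. upper_prodmat dims W k a' a * W 1 a j)"
proof (induction k arbitrary: a')
  case 0
  have "prodmat dims d W (Suc 0) a' j = (\<Sum>b<d. W 1 a' b * (if b = j then 1 else 0))"
    by (simp add: dims0)
  also have "\<dots> = W 1 a' j"
    using j by (simp add: if_distrib cong: if_cong)
  also have "\<dots> = (\<Sum>a<dims 1. if a' = a then W 1 a j else 0)"
    using 0 by simp
  also have "\<dots> = (\<Sum>a<dims 1. upper_prodmat dims W 0 a' a * W 1 a j)"
    by (intro sum.cong) auto
  finally show ?case .
next
  case (Suc k)
  then have "prodmat dims d W (Suc (Suc k)) a' j =
      (\<Sum>b<dims (Suc k). W (Suc (Suc k)) a' b * (\<Sum>a<dims 1. upper_prodmat dims W k b a * W 1 a j))"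
    by simp
  also have "\<dots> = (\<Sum>a<dims 1. upper_prodmat dims W (Suc k) a' a * W 1 a j)"
    by (simp add: sum_distrib_left sum_distrib_right mult.assoc) (rule sum.swap)
  finally show ?case .
qed

lemma abs_entry_le_maxnorm:
  assumes "valid_entry L dims k a b"
  shows "\<bar>W k a b\<bar> \<le> maxnorm L dims W"
proof -
  from assms have k: "k \<in> {1..L}" and a: "a < dims k" and b: "b < dims (k - 1)"
    by (auto simp: valid_entry_def)
  have "(W k a b)\<^sup>2 \<le> (\<Sum>b'<dims (k - 1). (W k a b')\<^sup>2)"
    using b by (intro member_le_sum) auto
  also have "\<dots> \<le> (\<Sum>a'<dims k. \<Sum>b'<dims (k - 1). (W k a' b')\<^sup>2)"
    using a by (intro member_le_sum[where f="\<lambda>a'. \<Sum>b'<dims (k - 1). (W k a' b')\<^sup>2"]) (auto intro: sum_nonneg)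
  finally have "\<bar>W k a b\<bar> \<le> frob_layer dims W k"
    unfolding frob_layer_def by (metis real_sqrt_abs real_sqrt_le_mono)
  also have "\<dots> \<le> maxnorm L dims W"
    unfolding maxnorm_def using k by (intro Max_ge) auto
  finally show ?thesis .
qed

lemma abs_entry_le_radius: "inB L dims R W \<Longrightarrow> valid_entry L dims k a b \<Longrightarrow> \<bar>W k a b\<bar> \<le> R"
  unfolding inB_def using abs_entry_le_maxnorm by (rule order.trans)

lemma abs_prodmat_le:
  assumes W: "inB L dims R W" and R: "0 \<le> R"
  shows "k \<le> L \<Longrightarrow> a < dims k \<Longrightarrow> \<bar>prodmat dims d W k a j\<bar> \<le> R ^ k * (\<Prod>i<k. real (dims i))"
proof (induction k arbitrary: a)
  case 0
  then show ?case by simp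
next
  case (Suc k)
  have "\<bar>prodmat dims d W (Suc k) a j\<bar> \<le> (\<Sum>b<dims k. \<bar>W (Suc k) a b\<bar> * \<bar>prodmat dims d W k b j\<bar>)"
    by (simp add: abs_mult[symmetric])
  also have "\<dots> \<le> (\<Sum>b<dims k. R * (R ^ k * (\<Prod>i<k. real (dims i))))"
  proof (intro sum_mono mult_mono)
    fix b assume b: "b \<in> {..<dims k}"
    show "\<bar>W (Suc k) a b\<bar> \<le> R"
      using Suc.prems b by (intro abs_entry_le_radius[OF W]) (auto simp: valid_entry_def)
    show "\<bar>prodmat dims d W k b j\<bar> \<le> R ^ k * (\<Prod>i<k. real (dims i))"
      using Suc.prems b by (intro Suc.IH) auto
  qed (use R in auto)
  also have "\<dots> = R ^ Suc k * (\<Prod>i<Suc k. real (dims i))" by simp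
  finally show ?case .
qed

section \<open>Risk and its gradient\<close>

lemma upd_entry_0: "upd_entry W k a b 0 = W"
  unfolding upd_entry_def by (auto simp: fun_eq_iff)

locale linear_network =
  fixes n d L :: nat and dims :: "nat \<Rightarrow> nat" and z :: "nat \<Rightarrow> nat \<Rightarrow> real"
    and lf dl :: "real \<Rightarrow> real"
  assumes L_pos: "1 \<le> L" and dims0: "dims 0 = d" and dims_pos: "\<forall>k. 0 < dims k"
    and l_deriv: "\<forall>s. (lf has_real_derivative dl s) (at s)"
    and dl_cont: "continuous_on UNIV dl" and dl_neg: "\<forall>s. dl s < 0"
    and l_top: "(lf \<longlongrightarrow> 0) at_top"
begin

abbreviation \<R> :: "params \<Rightarrow> real" where
  "\<R> \<equiv> risk lf n d z L dims"

definition margin :: "params \<Rightarrow> nat \<Rightarrow> real" where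
  "margin W i = (\<Sum>j<d. wprod L dims d W j * z i j)"

definition risk_dderiv :: "params \<Rightarrow> params \<Rightarrow> real" where
  "risk_dderiv W V = (1 / real n) * (\<Sum>i<n. dl (margin W i) * (\<Sum>j<d. dprodmat dims d W V L 0 j * z i j))"

definition risk_grad :: "params \<Rightarrow> nat \<Rightarrow> nat \<Rightarrow> nat \<Rightarrow> real" where
  "risk_grad W k a b = risk_dderiv W (unit_param k a b)"

definition entries :: "(nat \<times> nat \<times> nat) set" where
  "entries = {(k, a, b). valid_entry L dims k a b}"

definition grad_norm_sq :: "params \<Rightarrow> real" where
  "grad_norm_sq W = (\<Sum>(k, a, b)\<in>entries. (risk_grad W k a b)\<^sup>2)"

definition wprod_grad :: "params \<Rightarrow> nat \<Rightarrow> real" where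
  "wprod_grad W j = (1 / real n) * (\<Sum>i<n. dl (margin W i) * z i j)"

definition data_norm :: real where
  "data_norm = (\<Sum>i<n. \<Sum>j<d. \<bar>z i j\<bar>)"

lemma finite_entries: "finite entries"
proof -
  have "entries = Sigma {1..L} (\<lambda>k. {..<dims k} \<times> {..<dims (k - 1)})"
    unfolding entries_def valid_entry_def by auto
  then show ?thesis by simp
qed

lemma has_real_derivative_risk:
  assumes "\<And>k a b. valid_entry L dims k a b \<Longrightarrow> ((\<lambda>s. C s k a b) has_real_derivative V k a b) (at x within S)"
  shows "((\<lambda>s. \<R> (C s)) has_real_derivative risk_dderiv (C x) V) (at x within S)"
proof -
  have "0 < dims L" using dims_pos by auto
  then have margin_deriv: "((\<lambda>s. margin (C s) i) has_real_derivative (\<Sum>j<d. dprodmat dims d (C x) V L 0 j * z i j))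
      (at x within S)" for i
    unfolding margin_def wprod_def
    by (intro DERIV_sum) (auto intro!: DERIV_mult[OF has_real_derivative_prodmat[OF assms] DERIV_const, simplified])
  then have "((\<lambda>s. (1 / real n) * (\<Sum>i<n. lf (margin (C s) i))) has_real_derivative risk_dderiv (C x) V)
      (at x within S)"
    unfolding risk_dderiv_def
    by (intro DERIV_cmult DERIV_sum DERIV_chain2[OF _ margin_deriv]) (use l_deriv in auto)
  then show ?thesis unfolding risk_def margin_def .
qed

lemma pderiv_entry_risk: "pderiv_entry \<R> W k a b = risk_grad W k a b"
proof -
  have "((\<lambda>s. upd_entry W k a b s k' a' b') has_real_derivative unit_param k a b k' a' b') (at 0)" for k' a' b'
    unfolding upd_entry_def unit_param_def
    by (cases "(k', a', b') = (k, a, b)") (auto intro!: derivative_eq_intros)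
  from has_real_derivative_risk[where C="upd_entry W k a b" and x=0 and S=UNIV, OF this]
  have "((\<lambda>s. \<R> (upd_entry W k a b s)) has_real_derivative risk_grad W k a b) (at 0)"
    unfolding risk_grad_def by (simp add: upd_entry_0)
  then show ?thesis unfolding pderiv_entry_def by (rule DERIV_imp_deriv)
qed

lemma risk_dderiv_eq_sum: "risk_dderiv W V = (\<Sum>(k, a, b)\<in>entries. V k a b * risk_grad W k a b)"
proof -
  let ?V = "\<lambda>e. V (fst e) (fst (snd e)) (snd (snd e))"
  let ?U = "\<lambda>e. unit_param (fst e) (fst (snd e)) (snd (snd e))"
  have expand: "(\<Sum>e\<in>entries. ?V e * ?U e k a b) = V k a b" if "valid_entry L dims k a b" for k a b
  proof -
    have "(\<Sum>e\<in>entries. ?V e * ?U e k a b) = (\<Sum>e\<in>entries. if e = (k, a, b) then V k a b else 0)"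
      unfolding unit_param_def by (intro sum.cong) auto
    also have "\<dots> = V k a b" using that finite_entries by (simp add: entries_def)
    finally show ?thesis .
  qed
  have "dprodmat dims d W V L 0 j = dprodmat dims d W (\<lambda>k a b. \<Sum>e\<in>entries. ?V e * ?U e k a b) L 0 j" for j
    using dims_pos by (intro dprodmat_cong) (auto simp: expand)
  then have "risk_dderiv W V = (\<Sum>e\<in>entries. ?V e * risk_grad W (fst e) (fst (snd e)) (snd (snd e)))"
    unfolding risk_dderiv_def risk_grad_def dprodmat_sum
    by (simp add: sum_distrib_left sum_distrib_right algebra_simps sum.swap[of _ entries])
  then show ?thesis by (simp add: case_prod_beta)
qed

lemma risk_has_derivative_along_flow:
  assumes "\<And>k a b. valid_entry L dims k a b \<Longrightarrow>
      ((\<lambda>s. W s k a b) has_real_derivative - pderiv_entry \<R> (W t) k a b) (at t within S)"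
  shows "((\<lambda>s. \<R> (W s)) has_real_derivative - grad_norm_sq (W t)) (at t within S)"
proof -
  have "((\<lambda>s. \<R> (W s)) has_real_derivative risk_dderiv (W t) (\<lambda>k a b. - risk_grad (W t) k a b)) (at t within S)"
    using assms by (intro has_real_derivative_risk) (simp add: pderiv_entry_risk)
  also have "risk_dderiv (W t) (\<lambda>k a b. - risk_grad (W t) k a b) = - grad_norm_sq (W t)"
    unfolding risk_dderiv_eq_sum grad_norm_sq_def
    by (simp add: sum_negf[symmetric] case_prod_beta power2_eq_square)
  finally show ?thesis .
qed

lemma risk_grad_first_layer:
  assumes a: "a < dims 1" and b: "b < d"
  shows "risk_grad W 1 a b = upper_prodmat dims W (L - 1) 0 a * wprod_grad W b"
proof -
  have L: "L = Suc (L - 1)" using L_pos by simp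
  have "dprodmat dims d W (unit_param 1 a b) L 0 j = upper_prodmat dims W (L - 1) 0 a * (if b = j then 1 else 0)" for j
    by (subst L) (rule dprodmat_unit_first_layer[where dims = dims, OF dims0 b])
  then have "(\<Sum>j<d. dprodmat dims d W (unit_param 1 a b) L 0 j * z i j)
      = (\<Sum>j<d. if b = j then upper_prodmat dims W (L - 1) 0 a * z i j else 0)" for i
    by (intro sum.cong) auto
  also have "\<dots> i = upper_prodmat dims W (L - 1) 0 a * z i b" for i
    using b by simp
  finally have "(\<Sum>j<d. dprodmat dims d W (unit_param 1 a b) L 0 j * z i j) = upper_prodmat dims W (L - 1) 0 a * z i b" for i .
  then show ?thesis unfolding risk_grad_def risk_dderiv_def wprod_grad_def
    by (simp add: sum_distrib_left algebra_simps)
qed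

lemma margin_eq_upper_prodmat:
  "margin W i = (\<Sum>a<dims 1. upper_prodmat dims W (L - 1) 0 a * (\<Sum>j<d. W 1 a j * z i j))"
proof -
  have L: "L = Suc (L - 1)" using L_pos by simp
  have "0 < dims (Suc (L - 1))" using dims_pos by auto
  then have "margin W i = (\<Sum>j<d. (\<Sum>a<dims 1. upper_prodmat dims W (L - 1) 0 a * W 1 a j) * z i j)"
    unfolding margin_def wprod_def
    by (subst L, intro sum.cong refl, subst prodmat_Suc_eq_upper_prodmat[where dims = dims, OF dims0]) auto
  then show ?thesis by (simp add: sum_distrib_left sum_distrib_right mult.assoc) (rule sum.swap)
qed

lemma grad_W1_norm_eq:
  "grad_W1_norm dims \<R> W =
     sqrt ((\<Sum>a<dims 1. (upper_prodmat dims W (L - 1) 0 a)\<^sup>2) * (\<Sum>b<d. (wprod_grad W b)\<^sup>2))"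
proof -
  have "(\<Sum>a<dims 1. \<Sum>b<dims 0. (pderiv_entry \<R> W 1 a b)\<^sup>2)
      = (\<Sum>a<dims 1. \<Sum>b<d. (upper_prodmat dims W (L - 1) 0 a)\<^sup>2 * (wprod_grad W b)\<^sup>2)"
    unfolding dims0 pderiv_entry_risk
    by (intro sum.cong refl) (auto simp: risk_grad_first_layer[simplified] power_mult_distrib)
  then show ?thesis unfolding grad_W1_norm_def by (simp add: sum_product)
qed

lemma grad_W1_norm_sq_le: "(grad_W1_norm dims \<R> W)\<^sup>2 \<le> grad_norm_sq W"
proof -
  let ?f = "\<lambda>(k, a, b). (risk_grad W k a b)\<^sup>2"
  let ?h = "\<lambda>(a::nat, b::nat). (1::nat, a, b)"
  have "(grad_W1_norm dims \<R> W)\<^sup>2 = (\<Sum>a<dims 1. \<Sum>b<d. (risk_grad W 1 a b)\<^sup>2)"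
    unfolding grad_W1_norm_def dims0 pderiv_entry_risk by (simp add: sum_nonneg)
  also have "\<dots> = (\<Sum>p\<in>{..<dims 1} \<times> {..<d}. ?f (?h p))"
    by (simp add: sum.cartesian_product)
  also have "\<dots> = sum ?f (?h ` ({..<dims 1} \<times> {..<d}))"
    by (subst sum.reindex) (auto simp: inj_on_def intro!: sum.cong)
  also have "\<dots> \<le> sum ?f entries"
    using L_pos dims0 by (intro sum_mono2 finite_entries) (auto simp: entries_def valid_entry_def)
  finally show ?thesis unfolding grad_norm_sq_def .
qed

lemma grad_norm_sq_nonneg: "0 \<le> grad_norm_sq W"
  unfolding grad_norm_sq_def by (intro sum_nonneg) auto

lemma lf_strict_decreasing: "s < s' \<Longrightarrow> lf s' < lf s"
  by (rule DERIV_neg_imp_decreasing) (use l_deriv dl_neg in auto)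

lemma lf_pos: "0 < lf s"
  using lf_strict_decreasing l_top by (rule pos_if_strict_decreasing_tendsto_zero)

lemma risk_nonneg: "0 \<le> \<R> W"
  unfolding risk_def by (intro mult_nonneg_nonneg sum_nonneg) (auto intro: less_imp_le[OF lf_pos])

lemma exists_margin_gt:
  assumes n: "0 < n" and lt: "\<R> W < lf s"
  shows "\<exists>i<n. s < margin W i"
proof (rule ccontr)
  assume "\<not> (\<exists>i<n. s < margin W i)"
  then have "lf s \<le> lf (margin W i)" if "i < n" for i
    using that lf_strict_decreasing[of "margin W i" s] by (cases "margin W i = s") auto
  then have "real n * lf s \<le> (\<Sum>i<n. lf (margin W i))"
    using sum_mono[of "{..<n}" "\<lambda>_. lf s"] by simp
  then have "lf s \<le> \<R> W" unfolding risk_def margin_def using n by (simp add: field_simps)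
  with lt show False by simp
qed

lemma data_row_le_data_norm: "i < n \<Longrightarrow> (\<Sum>j<d. \<bar>z i j\<bar>) \<le> data_norm"
  unfolding data_norm_def by (intro member_le_sum[where f="\<lambda>i. \<Sum>j<d. \<bar>z i j\<bar>"]) (auto intro: sum_nonneg)

lemma data_norm_nonneg: "0 \<le> data_norm"
  unfolding data_norm_def by (intro sum_nonneg) auto

lemma abs_margin_le:
  assumes W: "inB L dims R W" and R: "0 \<le> R" and i: "i < n"
  shows "\<bar>margin W i\<bar> \<le> R ^ L * (\<Prod>k<L. real (dims k)) * data_norm"
proof -
  let ?M = "R ^ L * (\<Prod>k<L. real (dims k))"
  have "\<bar>margin W i\<bar> \<le> (\<Sum>j<d. \<bar>wprod L dims d W j\<bar> * \<bar>z i j\<bar>)"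
    unfolding margin_def by (simp add: abs_mult[symmetric])
  also have "\<dots> \<le> (\<Sum>j<d. ?M * \<bar>z i j\<bar>)"
    using abs_prodmat_le[OF W R, of L 0] dims_pos unfolding wprod_def
    by (intro sum_mono mult_right_mono) auto
  also have "\<dots> \<le> ?M * data_norm"
    using data_row_le_data_norm[OF i] R dims_pos
    by (simp add: sum_distrib_left[symmetric] mult_left_mono prod_nonneg)
  finally show ?thesis .
qed

lemma abs_first_layer_output_le:
  assumes W: "inB L dims R W" and R: "0 \<le> R" and i: "i < n" and a: "a < dims 1"
  shows "\<bar>\<Sum>j<d. W 1 a j * z i j\<bar> \<le> R * data_norm"
proof -
  have "\<bar>\<Sum>j<d. W 1 a j * z i j\<bar> \<le> (\<Sum>j<d. R * \<bar>z i j\<bar>)"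
  proof (rule order.trans[OF sum_abs sum_mono])
    fix j assume "j \<in> {..<d}"
    then have "\<bar>W 1 a j\<bar> \<le> R"
      using L_pos a dims0 by (intro abs_entry_le_radius[OF W]) (simp add: valid_entry_def)
    then show "\<bar>W 1 a j * z i j\<bar> \<le> R * \<bar>z i j\<bar>" by (simp add: abs_mult mult_right_mono)
  qed
  also have "\<dots> \<le> R * data_norm"
    using data_row_le_data_norm[OF i] R by (simp add: sum_distrib_left[symmetric] mult_left_mono)
  finally show ?thesis .
qed

lemma dl_margin_bounded_away_from_0:
  assumes R: "0 \<le> R"
  shows "\<exists>c>0. \<forall>W i. inB L dims R W \<longrightarrow> i < n \<longrightarrow> dl (margin W i) \<le> - c"
proof -
  define K where "K = R ^ L * (\<Prod>k<L. real (dims k)) * data_norm"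
  have "0 \<le> K" unfolding K_def using R dims_pos data_norm_nonneg by (simp add: prod_nonneg)
  then obtain s0 where "\<forall>s\<in>{-K..K}. dl s \<le> dl s0"
    using continuous_attains_sup[of "{-K..K}" dl] continuous_on_subset[OF dl_cont] by auto
  then have "dl (margin W i) \<le> - (- dl s0)" if "inB L dims R W" "i < n" for W i
    using abs_margin_le[OF that(1) R that(2)] unfolding K_def by (auto simp: abs_le_iff)
  moreover have "0 < - dl s0" using dl_neg by simp
  ultimately show ?thesis by blast
qed

lemma wprod_grad_norm_sq_lower_bound:
  assumes n: "0 < n" and sep: "\<forall>i<n. 0 < (\<Sum>j<d. u j * z i j)" and R: "0 \<le> R"
  shows "\<exists>\<delta>>0. \<forall>W. inB L dims R W \<longrightarrow> \<delta> \<le> (\<Sum>b<d. (wprod_grad W b)\<^sup>2)"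
proof -
  obtain c where c: "0 < c" and dl_le: "\<And>W i. inB L dims R W \<Longrightarrow> i < n \<Longrightarrow> dl (margin W i) \<le> - c"
    using dl_margin_bounded_away_from_0[OF R] by blast
  define P where "P = (\<Sum>i<n. \<Sum>j<d. u j * z i j)"
  have P: "0 < P" unfolding P_def using n sep by (intro sum_pos[where f="\<lambda>i. \<Sum>j<d. u j * z i j"]) auto
  define U where "U = (\<Sum>b<d. (u b)\<^sup>2)"
  have "\<exists>b<d. u b \<noteq> 0"
  proof (rule ccontr)
    assume "\<not> (\<exists>b<d. u b \<noteq> 0)"
    then have "(\<Sum>j<d. u j * z 0 j) = 0" by simp
    with sep n show False by force
  qed
  then obtain b where "b < d" "u b \<noteq> 0" by blast
  then have U: "0 < U" unfolding U_def by (intro sum_pos2[of _ b]) auto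
  have "(c * P / real n)\<^sup>2 / U \<le> (\<Sum>b<d. (wprod_grad W b)\<^sup>2)" if W: "inB L dims R W" for W
  proof -
    have "(\<Sum>b<d. wprod_grad W b * u b) = (1 / real n) * (\<Sum>i<n. dl (margin W i) * (\<Sum>j<d. u j * z i j))"
      unfolding wprod_grad_def by (simp add: sum_distrib_left sum_distrib_right algebra_simps) (rule sum.swap)
    also have "\<dots> \<le> (1 / real n) * (\<Sum>i<n. - c * (\<Sum>j<d. u j * z i j))"
      using dl_le[OF W] sep by (intro mult_left_mono sum_mono mult_right_mono) (auto intro: less_imp_le)
    also have "\<dots> = (1 / real n) * (- c * P)" unfolding P_def by (simp only: sum_distrib_left)
    also have "\<dots> = - (c * P / real n)" by simp
    finally have "(c * P / real n)\<^sup>2 \<le> (- (\<Sum>b<d. wprod_grad W b * u b))\<^sup>2"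
      using c P n by (intro power_mono) auto
    then have "(c * P / real n)\<^sup>2 \<le> (\<Sum>b<d. wprod_grad W b * u b)\<^sup>2"
      by simp
    also have "\<dots> \<le> (\<Sum>b<d. (wprod_grad W b)\<^sup>2) * U"
      unfolding U_def by (rule Cauchy_Schwarz_ineq_sum)
    finally show ?thesis using U by (simp add: pos_divide_le_eq)
  qed
  moreover have "0 < (c * P / real n)\<^sup>2 / U" using c P U n by simp
  ultimately show ?thesis by blast
qed

lemma upper_prodmat_norm_sq_lower_bound:
  assumes R: "0 \<le> R" and s: "0 < s"
  shows "\<exists>\<delta>>0. \<forall>W i. inB L dims R W \<longrightarrow> i < n \<longrightarrow> s \<le> margin W i \<longrightarrow>
           \<delta> \<le> (\<Sum>a<dims 1. (upper_prodmat dims W (L - 1) 0 a)\<^sup>2)"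
proof -
  define A where "A = R * data_norm + 1"
  have A: "0 < A" unfolding A_def using R data_norm_nonneg by (simp add: add_nonneg_pos)
  have "(s / A)\<^sup>2 / real (dims 1) \<le> (\<Sum>a<dims 1. (upper_prodmat dims W (L - 1) 0 a)\<^sup>2)"
    if W: "inB L dims R W" and i: "i < n" and margin: "s \<le> margin W i" for W i
  proof -
    let ?v = "\<lambda>a. upper_prodmat dims W (L - 1) 0 a"
    have response: "\<bar>\<Sum>j<d. W 1 a j * z i j\<bar> \<le> A" if "a < dims 1" for a
      using abs_first_layer_output_le[OF W R i that] unfolding A_def by simp
    have "s \<le> \<bar>\<Sum>a<dims 1. ?v a * (\<Sum>j<d. W 1 a j * z i j)\<bar>"
      using margin unfolding margin_eq_upper_prodmat by simp
    also have "\<dots> \<le> (\<Sum>a<dims 1. \<bar>?v a\<bar> * A)"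
      using response by (intro order.trans[OF sum_abs sum_mono]) (simp add: abs_mult mult_left_mono)
    finally have "s / A \<le> (\<Sum>a<dims 1. 1 * \<bar>?v a\<bar>)"
      using A by (simp add: sum_distrib_right[symmetric] pos_divide_le_eq)
    then have "(s / A)\<^sup>2 \<le> (\<Sum>a<dims 1. 1 * \<bar>?v a\<bar>)\<^sup>2"
      using s A by (intro power_mono) auto
    also have "\<dots> \<le> (\<Sum>a<dims 1. 1\<^sup>2) * (\<Sum>a<dims 1. \<bar>?v a\<bar>\<^sup>2)"
      by (rule Cauchy_Schwarz_ineq_sum)
    finally show ?thesis using dims_pos by (simp add: pos_divide_le_eq mult.commute)
  qed
  moreover have "0 < (s / A)\<^sup>2 / real (dims 1)" using s A dims_pos by simp
  ultimately show ?thesis by blast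
qed

lemma grad_W1_norm_lower_bound:
  assumes n: "0 < n" and sep: "\<forall>i<n. 0 < (\<Sum>j<d. u j * z i j)" and R: "0 \<le> R" and s: "0 < s"
  shows "\<exists>\<epsilon>>0. \<forall>W. inB L dims R W \<longrightarrow> (\<exists>i<n. s \<le> margin W i) \<longrightarrow> \<epsilon> \<le> grad_W1_norm dims \<R> W"
proof -
  obtain \<delta>\<^sub>v where \<delta>\<^sub>v: "0 < \<delta>\<^sub>v" "\<And>W i. inB L dims R W \<Longrightarrow> i < n \<Longrightarrow> s \<le> margin W i \<Longrightarrow>
      \<delta>\<^sub>v \<le> (\<Sum>a<dims 1. (upper_prodmat dims W (L - 1) 0 a)\<^sup>2)"
    using upper_prodmat_norm_sq_lower_bound[OF R s] by blast
  obtain \<delta>\<^sub>g where \<delta>\<^sub>g: "0 < \<delta>\<^sub>g" "\<And>W. inB L dims R W \<Longrightarrow> \<delta>\<^sub>g \<le> (\<Sum>b<d. (wprod_grad W b)\<^sup>2)"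
    using wprod_grad_norm_sq_lower_bound[OF n sep R] by blast
  have "sqrt (\<delta>\<^sub>v * \<delta>\<^sub>g) \<le> grad_W1_norm dims \<R> W"
    if "inB L dims R W" "i < n" "s \<le> margin W i" for W i
    unfolding grad_W1_norm_eq using \<delta>\<^sub>v \<delta>\<^sub>g that by (intro real_sqrt_le_mono mult_mono) (auto intro: sum_nonneg)
  moreover have "0 < sqrt (\<delta>\<^sub>v * \<delta>\<^sub>g)" using \<delta>\<^sub>v \<delta>\<^sub>g by simp
  ultimately show ?thesis by blast
qed

end

section \<open>The gradient flow\<close>

locale linear_network_flow = linear_network +
  fixes W :: "real \<Rightarrow> params" and u :: "nat \<Rightarrow> real"
  assumes flow: "\<forall>t\<ge>0. \<forall>k a b. valid_entry L dims k a b \<longrightarrow>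
                 ((\<lambda>s. W s k a b) has_real_derivative - pderiv_entry \<R> (W t) k a b) (at t within {0..})"
    and grad0: "\<exists>k a b. valid_entry L dims k a b \<and> pderiv_entry \<R> (W 0) k a b \<noteq> 0"
    and risk0: "\<R> (W 0) \<le> lf 0"
    and sep: "\<forall>i<n. 0 < (\<Sum>j<d. u j * z i j)"
begin

lemma n_pos: "0 < n"
proof (rule ccontr)
  assume "\<not> 0 < n"
  then have "pderiv_entry \<R> W' k a b = 0" for W' k a b
    unfolding pderiv_entry_risk risk_grad_def risk_dderiv_def by simp
  with grad0 show False by auto
qed

lemma risk_flow_deriv: "0 \<le> t \<Longrightarrow> ((\<lambda>s. \<R> (W s)) has_real_derivative - grad_norm_sq (W t)) (at t within {0..})"
  using flow by (intro risk_has_derivative_along_flow) auto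

lemma risk_flow_antimono:
  assumes t: "0 \<le> t" and t': "t \<le> t'"
  shows "\<R> (W t') \<le> \<R> (W t)"
proof (rule DERIV_nonpos_imp_decreasing_open[OF t'])
  fix s assume "t < s" "s < t'"
  then have s: "0 < s" using t by simp
  have "((\<lambda>s. \<R> (W s)) has_real_derivative - grad_norm_sq (W s)) (at s within {0<..})"
    using s by (intro DERIV_subset[OF risk_flow_deriv]) auto
  then have "((\<lambda>s. \<R> (W s)) has_real_derivative - grad_norm_sq (W s)) (at s)"
    using at_within_open[of s "{0<..}"] s by simp
  then show "\<exists>y. ((\<lambda>s. \<R> (W s)) has_real_derivative y) (at s) \<and> y \<le> 0"
    using grad_norm_sq_nonneg by auto
next
  have "continuous_on {0..} (\<lambda>s. \<R> (W s))"
    unfolding continuous_on_eq_continuous_within using risk_flow_deriv DERIV_continuous by (metis atLeast_iff)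
  then show "continuous_on {t..t'} (\<lambda>s. \<R> (W s))"
    by (rule continuous_on_subset) (use t in auto)
qed

lemma grad_norm_sq_init_pos: "0 < grad_norm_sq (W 0)"
proof -
  obtain k a b where v: "valid_entry L dims k a b" and nz: "risk_grad (W 0) k a b \<noteq> 0"
    using grad0 pderiv_entry_risk by auto
  have "(risk_grad (W 0) k a b)\<^sup>2 \<le> grad_norm_sq (W 0)"
    unfolding grad_norm_sq_def using v finite_entries
    by (intro member_le_sum[where f="\<lambda>(k, a, b). (risk_grad (W 0) k a b)\<^sup>2", of "(k, a, b)", simplified])
      (auto simp: entries_def)
  moreover have "0 < (risk_grad (W 0) k a b)\<^sup>2" using nz by simp
  ultimately show ?thesis by linarith
qed

lemma risk_flow_one_lt: "\<R> (W 1) < lf 0"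
proof -
  obtain \<delta> where \<delta>: "0 < \<delta>" and dec: "\<forall>h>0. 0 + h \<in> {0..} \<longrightarrow> h < \<delta> \<longrightarrow> \<R> (W (0 + h)) < \<R> (W 0)"
    using has_real_derivative_neg_dec_right[OF risk_flow_deriv[of 0]] grad_norm_sq_init_pos by auto
  define h where "h = min (\<delta> / 2) 1"
  have "\<R> (W 1) \<le> \<R> (W h)" using \<delta> by (intro risk_flow_antimono) (auto simp: h_def)
  also have "\<dots> < \<R> (W 0)" using dec \<delta> by (auto simp: h_def)
  also have "\<dots> \<le> lf 0" by (rule risk0)
  finally show ?thesis .
qed

lemma large_margin_after_one: "\<exists>s>0. \<forall>t\<ge>1. \<exists>i<n. s \<le> margin (W t) i"
proof -
  have "isCont lf 0" using l_deriv DERIV_isCont by blast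
  then have "\<forall>\<^sub>F s in at 0. \<R> (W 1) < lf s"
    using risk_flow_one_lt by (intro order_tendstoD(1)) (simp add: isCont_def)
  then obtain \<delta> where \<delta>: "0 < \<delta>" and near: "\<forall>s. s \<noteq> 0 \<and> dist s 0 < \<delta> \<longrightarrow> \<R> (W 1) < lf s"
    unfolding eventually_at by auto
  define s where "s = \<delta> / 2"
  have s: "0 < s" and lt: "\<R> (W 1) < lf s" using \<delta> near by (auto simp: s_def dist_real_def)
  have "\<exists>i<n. s \<le> margin (W t) i" if "1 \<le> t" for t
  proof -
    have "\<R> (W t) < lf s" using risk_flow_antimono[of 1 t] that lt by simp
    then obtain i where "i < n" "s < margin (W t) i" using exists_margin_gt[OF n_pos] by blast
    then show ?thesis by auto
  qed
  with s show ?thesis by blast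
qed

lemma grad_W1_norm_bounded_below:
  assumes R: "0 \<le> R"
  shows "\<exists>\<epsilon>>0. \<forall>t\<ge>1. inB L dims R (W t) \<longrightarrow> \<epsilon> \<le> grad_W1_norm dims \<R> (W t)"
proof -
  obtain s where "0 < s" and margin: "\<forall>t\<ge>1. \<exists>i<n. s \<le> margin (W t) i"
    using large_margin_after_one by blast
  then obtain \<epsilon> where "0 < \<epsilon>"
    and bound: "\<forall>W. inB L dims R W \<longrightarrow> (\<exists>i<n. s \<le> margin W i) \<longrightarrow> \<epsilon> \<le> grad_W1_norm dims \<R> W"
    using grad_W1_norm_lower_bound[OF n_pos sep R] by blast
  moreover have "\<epsilon> \<le> grad_W1_norm dims \<R> (W t)" if "1 \<le> t" "inB L dims R (W t)" for t
    using bound margin that by simp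
  ultimately show ?thesis by blast
qed

definition times_in_ball :: "real \<Rightarrow> real set" where
  "times_in_ball R = {t. 0 \<le> t \<and> inB L dims R (W t)}"

lemma closed_times_in_ball: "closed (times_in_ball R)"
proof -
  have entry_cont: "continuous_on {0..} (\<lambda>t. W t k a b)" if "valid_entry L dims k a b" for k a b
    unfolding continuous_on_eq_continuous_within using flow that DERIV_continuous by (metis atLeast_iff)
  have "maxnorm L dims X \<le> R \<longleftrightarrow> (\<forall>k\<in>{1..L}. frob_layer dims X k \<le> R)" for X
    unfolding maxnorm_def using L_pos by (subst Max_le_iff) auto
  then have "times_in_ball R = (\<Inter>k\<in>{1..L}. {t \<in> {0..}. frob_layer dims (W t) k \<le> R})"
    unfolding times_in_ball_def inB_def using L_pos by auto
  moreover have "closed {t \<in> {0..}. frob_layer dims (W t) k \<le> R}" if k: "k \<in> {1..L}" for k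
  proof (rule continuous_on_closed_Collect_le)
    show "continuous_on {0..} (\<lambda>t. frob_layer dims (W t) k)" unfolding frob_layer_def
      by (intro continuous_on_real_sqrt continuous_on_sum continuous_on_power entry_cont)
        (use k in \<open>auto simp: valid_entry_def\<close>)
  qed auto
  ultimately show ?thesis by (simp add: closed_INT)
qed

lemma times_in_ball_lmeasurable:
  assumes R: "0 \<le> R"
  shows "times_in_ball R \<in> lmeasurable"
proof -
  obtain \<epsilon> where \<epsilon>: "0 < \<epsilon>" and grad: "\<forall>t\<ge>1. inB L dims R (W t) \<longrightarrow> \<epsilon> \<le> grad_W1_norm dims \<R> (W t)"
    using grad_W1_norm_bounded_below[OF R] by blast
  have "\<epsilon>\<^sup>2 \<le> grad_norm_sq (W t)" if "t \<in> times_in_ball R \<inter> {1..}" for t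
  proof -
    have "\<epsilon>\<^sup>2 \<le> (grad_W1_norm dims \<R> (W t))\<^sup>2"
      using that grad \<epsilon> by (intro power_mono) (auto simp: times_in_ball_def)
    then show ?thesis using grad_W1_norm_sq_le by (rule order.trans)
  qed
  then have "times_in_ball R \<inter> {1..} \<in> lmeasurable"
  proof (intro lmeasurable_if_dissipation_bounded[where F="\<lambda>t. \<R> (W t)" and e="\<epsilon>\<^sup>2"])
    show "((\<lambda>t. \<R> (W t)) has_real_derivative - grad_norm_sq (W t)) (at t within {1..})" if "1 \<le> t" for t
      using that by (intro DERIV_subset[OF risk_flow_deriv]) auto
  qed (use closed_times_in_ball risk_nonneg grad_norm_sq_nonneg \<epsilon> in auto)
  moreover have "times_in_ball R \<inter> {0..1} \<in> lmeasurable"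
    using closed_times_in_ball by (intro lmeasurable_compact closed_Int_compact) auto
  moreover have "times_in_ball R = (times_in_ball R \<inter> {0..1}) \<union> (times_in_ball R \<inter> {1..})"
    by (auto simp: times_in_ball_def)
  ultimately show ?thesis using fmeasurable.Un by metis
qed

lemma maxnorm_unbounded: "\<not> bdd_above ((\<lambda>t. maxnorm L dims (W t)) ` {0..})"
proof
  assume "bdd_above ((\<lambda>t. maxnorm L dims (W t)) ` {0..})"
  then obtain M where "\<forall>t\<ge>0. maxnorm L dims (W t) \<le> M" by (auto simp: bdd_above_def)
  then have "times_in_ball (max M 0) = {0..}"
    unfolding times_in_ball_def inB_def by (auto simp: le_max_iff_disj)
  with times_in_ball_lmeasurable[of "max M 0"] atLeast_not_lmeasurable show False by simp
qed

end

theorem mainTheorem2: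
  fixes n d L :: nat
    and dims :: "nat \<Rightarrow> nat"
    and x :: "nat \<Rightarrow> nat \<Rightarrow> real"
    and y :: "nat \<Rightarrow> real"
    and z :: "nat \<Rightarrow> nat \<Rightarrow> real"
    and lf dl :: "real \<Rightarrow> real"
    and W :: "real \<Rightarrow> params"
  assumes L_pos: "1 \<le> L"
    and dims_pos: "\<forall>k. 0 < dims k"
    and dims0: "dims 0 = d"
    and dimsL: "dims L = 1"
    and x_norm: "\<forall>i<n. sqrt (\<Sum>j<d. (x i j)\<^sup>2) \<le> 1"
    and y_pm: "\<forall>i<n. y i = 1 \<or> y i = -1"
    and z_def: "\<forall>i<n. \<forall>j<d. z i j = y i * x i j"
    and separable: "\<exists>u :: nat \<Rightarrow> real. \<forall>i<n. (\<Sum>j<d. u j * z i j) > 0"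
    and l_deriv: "\<forall>s. (lf has_real_derivative dl s) (at s)"
    and dl_cont: "continuous_on UNIV dl"
    and dl_neg: "\<forall>s. dl s < 0"
    and l_bot: "filterlim lf at_top at_bot"
    and l_top: "(lf \<longlongrightarrow> 0) at_top"
    and flow: "\<forall>t\<ge>0. \<forall>k a b. valid_entry L dims k a b \<longrightarrow>
                 ((\<lambda>s. W s k a b) has_real_derivative
                   - pderiv_entry (risk lf n d z L dims) (W t) k a b) (at t within {0..})"
    and grad0: "\<exists>k a b. valid_entry L dims k a b \<and>
                  pderiv_entry (risk lf n d z L dims) (W 0) k a b \<noteq> 0"
    and risk0: "risk lf n d z L dims (W 0) \<le> lf 0"
  shows "(\<forall>R>0. \<exists>\<epsilon>>0. \<forall>t\<ge>1. inB L dims R (W t) \<longrightarrow>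
            grad_W1_norm dims (risk lf n d z L dims) (W t) \<ge> \<epsilon>)
       \<and> (\<forall>R>0. {t. 0 \<le> t \<and> inB L dims R (W t)} \<in> lmeasurable)
       \<and> \<not> bdd_above ((\<lambda>t. maxnorm L dims (W t)) ` {0..})"
proof -
  obtain u where u: "\<forall>i<n. 0 < (\<Sum>j<d. u j * z i j)" using separable by blast
  interpret linear_network_flow n d L dims z lf dl W u
    using L_pos dims0 dims_pos l_deriv dl_cont dl_neg l_top flow grad0 risk0 u
    by unfold_locales auto
  have "\<forall>R>0. \<exists>\<epsilon>>0. \<forall>t\<ge>1. inB L dims R (W t) \<longrightarrow> \<epsilon> \<le> grad_W1_norm dims \<R> (W t)"
    using grad_W1_norm_bounded_below by (meson less_imp_le)
  moreover have "\<forall>R>0. {t. 0 \<le> t \<and> inB L dims R (W t)} \<in> lmeasurable"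
    using times_in_ball_lmeasurable unfolding times_in_ball_def by (meson less_imp_le)
  ultimately show ?thesis using maxnorm_unbounded by blast
qed

end
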